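(* Let $S$ be an anti-rectangular AG-groupoid. Every ideal of $S$ is prime if and only if every ideal of $S$ is idempotent and the set of ideals of $S$ is totally ordered under inclusion (for any ideals $I,J$, either $I\subseteq J$ or $J\subseteq I$).
   Context: An AG-groupoid is a set $S$ with a binary operation satisfying $(ab)c=(cb)a$ for all $a,b,c\in S$. It is anti-rectangular if $a=(ba)b$ for all $a,b\in S$. For nonempty subsets, $AB=\{ab:a\in A,b\in B\}$, $I^{2}=II$. An ideal of $S$ is a nonempty subset $I$ with $SI\subseteq I$ and $IS\subseteq I$; it is idempotent if $I^{2}=I$. An ideal $P$ is prime if for all ideals $A,B$ of $S$, $AB\subseteq P$ implies $A\subseteq P$ or $B\subseteq P$. *)

theory Defs
  imports Main
begin

definition AG_groupoid :: "'a set \<Rightarrow> ('a \<Rightarrow> 'a \<Rightarrow> 'a) \<Rightarrow> bool" where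
  "AG_groupoid S m \<longleftrightarrow> (\<forall>a\<in>S. \<forall>b\<in>S. m a b \<in> S) \<and>
     (\<forall>a\<in>S. \<forall>b\<in>S. \<forall>c\<in>S. m (m a b) c = m (m c b) a)"

definition anti_rectangular :: "'a set \<Rightarrow> ('a \<Rightarrow> 'a \<Rightarrow> 'a) \<Rightarrow> bool" where
  "anti_rectangular S m \<longleftrightarrow> (\<forall>a\<in>S. \<forall>b\<in>S. a = m (m b a) b)"

definition setmult :: "('a \<Rightarrow> 'a \<Rightarrow> 'a) \<Rightarrow> 'a set \<Rightarrow> 'a set \<Rightarrow> 'a set" where
  "setmult m A B = {m a b | a b. a \<in> A \<and> b \<in> B}"

definition is_ideal :: "'a set \<Rightarrow> ('a \<Rightarrow> 'a \<Rightarrow> 'a) \<Rightarrow> 'a set \<Rightarrow> bool" where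
  "is_ideal S m I \<longleftrightarrow> I \<noteq> {} \<and> I \<subseteq> S \<and> setmult m S I \<subseteq> I \<and> setmult m I S \<subseteq> I"

definition idempotent_ideal :: "'a set \<Rightarrow> ('a \<Rightarrow> 'a \<Rightarrow> 'a) \<Rightarrow> 'a set \<Rightarrow> bool" where
  "idempotent_ideal S m I \<longleftrightarrow> is_ideal S m I \<and> setmult m I I = I"

definition prime_ideal :: "'a set \<Rightarrow> ('a \<Rightarrow> 'a \<Rightarrow> 'a) \<Rightarrow> 'a set \<Rightarrow> bool" where
  "prime_ideal S m P \<longleftrightarrow> is_ideal S m P \<and>
     (\<forall>A B. is_ideal S m A \<longrightarrow> is_ideal S m B \<longrightarrow> setmult m A B \<subseteq> P \<longrightarrow> A \<subseteq> P \<or> B \<subseteq> P)"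

end

theory Submission
  imports Defs
begin

(* Two elementary facts about ideals drive everything:
   (1) the product AB of two ideals lies in the intersection A \<inter> B, and
       A \<inter> B is again an ideal;
   (2) in an anti-rectangular groupoid every ideal I is idempotent, because each
       a \<in> I can be written as a = (aa)a with aa \<in> I.
   "All ideals prime" implies total order: for ideals I, J the ideal I \<inter> J is
   prime and contains IJ, so I \<subseteq> I \<inter> J or J \<subseteq> I \<inter> J.  Idempotence holds by (2)
   in any case.  Conversely, if A \<subseteq> B (say) and AB \<subseteq> P, then
   A = AA \<subseteq> AB \<subseteq> P by idempotence. *)

lemma setmult_iff: "x \<in> setmult m A B \<longleftrightarrow> (\<exists>a\<in>A. \<exists>b\<in>B. x = m a b)"
  unfolding setmult_def by auto

lemma setmultI: "a \<in> A \<Longrightarrow> b \<in> B \<Longrightarrow> m a b \<in> setmult m A B"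
  by (auto simp: setmult_iff)

lemma setmult_mono: "A \<subseteq> A' \<Longrightarrow> B \<subseteq> B' \<Longrightarrow> setmult m A B \<subseteq> setmult m A' B'"
  unfolding setmult_iff subset_iff by blast

lemma ideal_mult_right: "is_ideal S m I \<Longrightarrow> a \<in> I \<Longrightarrow> b \<in> S \<Longrightarrow> m a b \<in> I"
  unfolding is_ideal_def using setmultI[of a I b S m] by blast

lemma ideal_mult_left: "is_ideal S m I \<Longrightarrow> a \<in> S \<Longrightarrow> b \<in> I \<Longrightarrow> m a b \<in> I"
  unfolding is_ideal_def using setmultI[of a S b I m] by blast

lemma ideal_subset: "is_ideal S m I \<Longrightarrow> I \<subseteq> S"
  unfolding is_ideal_def by blast

lemma ideal_product_subset_inter:
  assumes I: "is_ideal S m I" and J: "is_ideal S m J"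
  shows "setmult m I J \<subseteq> I \<inter> J"
proof
  fix x assume "x \<in> setmult m I J"
  then obtain a b where "a \<in> I" "b \<in> J" "x = m a b" by (auto simp: setmult_iff)
  then show "x \<in> I \<inter> J"
    using ideal_mult_right[OF I] ideal_mult_left[OF J] ideal_subset[OF I] ideal_subset[OF J]
    by auto
qed

text \<open>The intersection of two ideals is an ideal; it is nonempty because it
  contains their product.\<close>

lemma ideal_inter:
  assumes I: "is_ideal S m I" and J: "is_ideal S m J"
  shows "is_ideal S m (I \<inter> J)"
proof -
  obtain a b where "a \<in> I" "b \<in> J" using I J unfolding is_ideal_def by blast
  then have "I \<inter> J \<noteq> {}"
    using ideal_product_subset_inter[OF I J] setmultI[of a I b J m] by blast
  moreover have "setmult m S (I \<inter> J) \<subseteq> I \<inter> J"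
    using ideal_mult_left[OF I] ideal_mult_left[OF J] by (auto simp: setmult_iff)
  moreover have "setmult m (I \<inter> J) S \<subseteq> I \<inter> J"
    using ideal_mult_right[OF I] ideal_mult_right[OF J] by (auto simp: setmult_iff)
  ultimately show ?thesis
    using ideal_subset[OF I] unfolding is_ideal_def by blast
qed

text \<open>Every ideal of an anti-rectangular groupoid is idempotent: a = (aa)a.\<close>

lemma anti_rectangular_ideal_idempotent:
  assumes AR: "anti_rectangular S m" and I: "is_ideal S m I"
  shows "idempotent_ideal S m I"
proof -
  have "I \<subseteq> setmult m I I"
  proof
    fix a assume a: "a \<in> I"
    then have aS: "a \<in> S" using ideal_subset[OF I] by blast
    have "m (m a a) a \<in> setmult m I I"
      using ideal_mult_right[OF I a aS] a by (rule setmultI)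
    moreover have "a = m (m a a) a" using AR aS unfolding anti_rectangular_def by simp
    ultimately show "a \<in> setmult m I I" by simp
  qed
  then show ?thesis
    using ideal_product_subset_inter[OF I I] I unfolding idempotent_ideal_def by blast
qed

lemma prime_inter_imp_comparable:
  assumes I: "is_ideal S m I" and J: "is_ideal S m J"
    and prime: "prime_ideal S m (I \<inter> J)"
  shows "I \<subseteq> J \<or> J \<subseteq> I"
proof -
  have "I \<subseteq> I \<inter> J \<or> J \<subseteq> I \<inter> J"
    using prime I J ideal_product_subset_inter[OF I J] unfolding prime_ideal_def by blast
  then show ?thesis by blast
qed

text \<open>An ideal P is prime as soon as all ideals are idempotent and pairwise
  comparable: the smaller factor A satisfies A = AA \<subseteq> AB \<subseteq> P.\<close>

lemma idempotent_chain_imp_prime: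
  assumes P: "is_ideal S m P"
    and idem: "\<forall>I. is_ideal S m I \<longrightarrow> idempotent_ideal S m I"
    and chain: "\<forall>I J. is_ideal S m I \<longrightarrow> is_ideal S m J \<longrightarrow> I \<subseteq> J \<or> J \<subseteq> I"
  shows "prime_ideal S m P"
  unfolding prime_ideal_def
proof (intro conjI allI impI P)
  fix A B assume A: "is_ideal S m A" and B: "is_ideal S m B" and AB: "setmult m A B \<subseteq> P"
  have AA: "setmult m A A = A" and BB: "setmult m B B = B"
    using idem A B unfolding idempotent_ideal_def by auto
  from chain A B have "A \<subseteq> B \<or> B \<subseteq> A" by blast
  then show "A \<subseteq> P \<or> B \<subseteq> P"
  proof
    assume "A \<subseteq> B"
    then have "setmult m A A \<subseteq> setmult m A B" by (rule setmult_mono[OF order_refl])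
    then show ?thesis using AA AB by blast
  next
    assume "B \<subseteq> A"
    then have "setmult m B B \<subseteq> setmult m A B" by (rule setmult_mono[OF _ order_refl])
    then show ?thesis using BB AB by blast
  qed
qed

theorem theorem5:
  fixes S :: "'a set" and m :: "'a \<Rightarrow> 'a \<Rightarrow> 'a"
  assumes "AG_groupoid S m" and "anti_rectangular S m"
  shows "(\<forall>P. is_ideal S m P \<longrightarrow> prime_ideal S m P) \<longleftrightarrow>
         ((\<forall>I. is_ideal S m I \<longrightarrow> idempotent_ideal S m I) \<and>
          (\<forall>I J. is_ideal S m I \<longrightarrow> is_ideal S m J \<longrightarrow> I \<subseteq> J \<or> J \<subseteq> I))"
proof -
  have idem: "\<forall>I. is_ideal S m I \<longrightarrow> idempotent_ideal S m I"
    using anti_rectangular_ideal_idempotent[OF assms(2)] by blast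
  show ?thesis
  proof
    assume all_prime: "\<forall>P. is_ideal S m P \<longrightarrow> prime_ideal S m P"
    have "\<forall>I J. is_ideal S m I \<longrightarrow> is_ideal S m J \<longrightarrow> I \<subseteq> J \<or> J \<subseteq> I"
      using all_prime ideal_inter prime_inter_imp_comparable by blast
    with idem show "(\<forall>I. is_ideal S m I \<longrightarrow> idempotent_ideal S m I) \<and>
          (\<forall>I J. is_ideal S m I \<longrightarrow> is_ideal S m J \<longrightarrow> I \<subseteq> J \<or> J \<subseteq> I)" by blast
  next
    assume "(\<forall>I. is_ideal S m I \<longrightarrow> idempotent_ideal S m I) \<and>
          (\<forall>I J. is_ideal S m I \<longrightarrow> is_ideal S m J \<longrightarrow> I \<subseteq> J \<or> J \<subseteq> I)"
    then show "\<forall>P. is_ideal S m P \<longrightarrow> prime_ideal S m P"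
      using idempotent_chain_imp_prime by blast
  qed
qed

end
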